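(* In the algebra $(\mathbb Z,+,\mathbb Z)$, the monolinear proportion relation $::_m$ satisfies, for all $a,b,c,d,e,f\in\mathbb Z$: p-reflexivity $a:b::_m a:b$; p-symmetry $a:b::_m c:d\iff c:d::_m a:b$; inner p-symmetry $a:b::_m c:d\iff b:a::_m d:c$; p-determinism $a:a::_m a:d\iff d=a$; inner p-reflexivity $a:a::_m c:c$; central permutation $a:b::_m c:d\iff a:c::_m b:d$; strong inner p-reflexivity ($a:a::_m c:d\Rightarrow d=c$); strong p-reflexivity ($a:b::_m a:d\Rightarrow d=b$); p-transitivity ($a:b::_m c:d$ and $c:d::_m e:f$ imply $a:b::_m e:f$); inner p-transitivity ($a:b::_m c:d$ and $b:e::_m d:f$ imply $a:e::_m c:f$); central p-transitivity ($a:b::_m b:c$ and $b:c::_m c:d$ imply $a:b::_m c:d$). However, p-commutativity ($a:b::_m b:a$ for all $a,b$) fails.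
   Context: $(\mathbb Z,+,\mathbb Z)$ is the algebra with universe $\mathbb Z$, addition, and every integer as a constant. A justification is a pair of terms $s\to t$ with the variables of $t$ among those of $s$; monolinear justifications are those where $s,t$ contain only one fixed variable $x$, occurring at most once in $s$ and at most once in $t$. $\uparrow^m(a\to b)$ is the set of monolinear justifications $s\to t$ with $a=s(\mathbf o)$, $b=t(\mathbf o)$ for some value $\mathbf o$; $\uparrow^m(a\to b:\!\cdot\,c\to d):=\uparrow^m(a\to b)\cap\uparrow^m(c\to d)$. A monolinear justification is trivial if it lies in all sets $\uparrow^m(a'\to b':\!\cdot\,c'\to d')$. $a\to b:\!\cdot_m\,c\to d$ holds iff either (i) all justifications in $\uparrow^m(a\to b)\cup\uparrow^m(c\to d)$ are trivial, or (ii) $J_d:=\uparrow^m(a\to b:\!\cdot\,c\to d)$ contains a non-trivial justification and for every $d'$, $J_d\subseteq J_{d'}$ implies $J_{d'}$ contains a non-trivial justification and $J_{d'}\subseteq J_d$ (ignoring trivial justifications). $a:b::_m c:d$ iff $a\to b:\!\cdot_m\,c\to d$, $b\to a:\!\cdot_m\,d\to c$, $c\to d:\!\cdot_m\,a\to b$, $d\to c:\!\cdot_m\,b\to a$ all hold. *)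

theory Defs
  imports Main
begin

datatype zterm = X | C int | Plus zterm zterm

fun zeval :: "zterm \<Rightarrow> int \<Rightarrow> int" where
  "zeval X o' = o'"
| "zeval (C k) o' = k"
| "zeval (Plus s t) o' = zeval s o' + zeval t o'"

fun occ :: "zterm \<Rightarrow> nat" where
  "occ X = 1"
| "occ (C k) = 0"
| "occ (Plus s t) = occ s + occ t"

text \<open>Monolinear justification s \<rightarrow> t: x occurs at most once in s and in t,
  and the variables of t are among those of s.\<close>
definition monolinear :: "zterm \<times> zterm \<Rightarrow> bool" where
  "monolinear j \<longleftrightarrow> occ (fst j) \<le> 1 \<and> occ (snd j) \<le> 1 \<and>
     (occ (snd j) > 0 \<longrightarrow> occ (fst j) > 0)"

definition up_m :: "int \<Rightarrow> int \<Rightarrow> (zterm \<times> zterm) set" where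
  "up_m a b = {j. monolinear j \<and> (\<exists>o'. zeval (fst j) o' = a \<and> zeval (snd j) o' = b)}"

definition up_m2 :: "int \<Rightarrow> int \<Rightarrow> int \<Rightarrow> int \<Rightarrow> (zterm \<times> zterm) set" where
  "up_m2 a b c d = up_m a b \<inter> up_m c d"

definition trivial_j :: "zterm \<times> zterm \<Rightarrow> bool" where
  "trivial_j j \<longleftrightarrow> monolinear j \<and> (\<forall>a' b' c' d'. j \<in> up_m2 a' b' c' d')"

definition nontriv :: "(zterm \<times> zterm) set \<Rightarrow> (zterm \<times> zterm) set" where
  "nontriv J = {j \<in> J. \<not> trivial_j j}"

definition arrow_prop :: "int \<Rightarrow> int \<Rightarrow> int \<Rightarrow> int \<Rightarrow> bool" where
  "arrow_prop a b c d \<longleftrightarrow>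
     (\<forall>j \<in> up_m a b \<union> up_m c d. trivial_j j)
   \<or> (nontriv (up_m2 a b c d) \<noteq> {} \<and>
      (\<forall>d'. nontriv (up_m2 a b c d) \<subseteq> nontriv (up_m2 a b c d') \<longrightarrow>
         nontriv (up_m2 a b c d') \<noteq> {} \<and> nontriv (up_m2 a b c d') \<subseteq> nontriv (up_m2 a b c d)))"

definition prop_m :: "int \<Rightarrow> int \<Rightarrow> int \<Rightarrow> int \<Rightarrow> bool" where
  "prop_m a b c d \<longleftrightarrow> arrow_prop a b c d \<and> arrow_prop b a d c \<and>
     arrow_prop c d a b \<and> arrow_prop d c b a"

end

theory Submission
  imports Defs
begin

text \<open>Every term in one variable denotes an affine map \<open>x \<mapsto> occ t * x + k\<close>, so a monolinear
  justification either translates (\<open>x \<rightarrow> x + k\<close>) or has a constant target. No justification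
  is trivial, since none lies in both \<open>\<up>\<^sup>m(0 \<rightarrow> 0)\<close> and \<open>\<up>\<^sup>m(0 \<rightarrow> 1)\<close>. Hence
  \<open>a \<rightarrow> b :\<cdot>\<^sub>m c \<rightarrow> d\<close> holds exactly when \<open>d - c = b - a\<close> (a shared translation) or \<open>d = b\<close>
  (a shared constant target), each witnessed by a justification that determines \<open>d\<close>.
  The four directions together reduce \<open>a : b ::\<^sub>m c : d\<close> to the arithmetic proportion
  \<open>a - b = c - d\<close>, from which all listed properties are linear arithmetic; commutativity fails
  for \<open>0 : 1 ::\<^sub>m 1 : 0\<close>.\<close>

lemma zeval_affine: "zeval t o' = int (occ t) * o' + zeval t 0"
  by (induction t) (auto simp: algebra_simps)

lemma monolinear_translation_or_constant:
  assumes "monolinear j"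
  obtains k where "\<And>o'. zeval (snd j) o' = zeval (fst j) o' + k"
        | k where "\<And>o'. zeval (snd j) o' = k"
proof (cases "occ (snd j) = 0")
  case True
  show ?thesis
  proof (rule that(2))
    show "zeval (snd j) o' = zeval (snd j) 0" for o'
      using True zeval_affine[of "snd j" o'] by simp
  qed
next
  case False
  with assms have "occ (fst j) = 1" "occ (snd j) = 1" unfolding monolinear_def by auto
  show ?thesis
  proof (rule that(1))
    show "zeval (snd j) o' = zeval (fst j) o' + (zeval (snd j) 0 - zeval (fst j) 0)" for o'
      using \<open>occ (fst j) = 1\<close> \<open>occ (snd j) = 1\<close>
        zeval_affine[of "fst j" o'] zeval_affine[of "snd j" o'] by simp
  qed
qed

lemma mem_up_m2_imp:
  assumes "j \<in> up_m2 a b c d"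
  shows "d - c = b - a \<or> d = b"
proof -
  obtain o1 o2 where "monolinear j"
      "zeval (fst j) o1 = a" "zeval (snd j) o1 = b"
      "zeval (fst j) o2 = c" "zeval (snd j) o2 = d"
    using assms unfolding up_m2_def up_m_def by auto
  then show ?thesis by (cases rule: monolinear_translation_or_constant) auto
qed

lemma not_trivial_j: "\<not> trivial_j j"
proof
  assume "trivial_j j"
  then have "j \<in> up_m2 0 0 0 1" unfolding trivial_j_def by blast
  from mem_up_m2_imp[OF this] show False by simp
qed

lemma nontriv_eq [simp]: "nontriv J = J"
  unfolding nontriv_def using not_trivial_j by auto

lemma arrow_propI:
  assumes "j \<in> up_m2 a b c d" and "\<And>d'. j \<in> up_m c d' \<Longrightarrow> d' = d"
  shows "arrow_prop a b c d"
proof -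
  have "up_m2 a b c d' = up_m2 a b c d" if "up_m2 a b c d \<subseteq> up_m2 a b c d'" for d'
    using that assms unfolding up_m2_def by blast
  then show ?thesis using assms(1) unfolding arrow_prop_def by auto
qed

lemma arrow_prop_iff: "arrow_prop a b c d \<longleftrightarrow> d - c = b - a \<or> d = b"
proof
  assume "arrow_prop a b c d"
  moreover have "(C a, C b) \<in> up_m a b" unfolding up_m_def monolinear_def by auto
  ultimately have "up_m2 a b c d \<noteq> {}" using not_trivial_j unfolding arrow_prop_def by auto
  then show "d - c = b - a \<or> d = b" using mem_up_m2_imp by blast
next
  assume "d - c = b - a \<or> d = b"
  then show "arrow_prop a b c d"
  proof
    assume "d - c = b - a"
    then show ?thesis
      by (intro arrow_propI[where j = "(X, Plus X (C (b - a)))"])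
        (auto simp: up_m2_def up_m_def monolinear_def)
  next
    assume "d = b"
    then show ?thesis
      by (intro arrow_propI[where j = "(X, C b)"]) (auto simp: up_m2_def up_m_def monolinear_def)
  qed
qed

lemma prop_m_iff: "prop_m a b c d \<longleftrightarrow> a - b = c - d"
  unfolding prop_m_def arrow_prop_iff by auto

theorem mainTheorem5:
  shows "(\<forall>a b. prop_m a b a b)
   \<and> (\<forall>a b c d. prop_m a b c d \<longleftrightarrow> prop_m c d a b)
   \<and> (\<forall>a b c d. prop_m a b c d \<longleftrightarrow> prop_m b a d c)
   \<and> (\<forall>a d. prop_m a a a d \<longleftrightarrow> d = a)
   \<and> (\<forall>a c. prop_m a a c c)
   \<and> (\<forall>a b c d. prop_m a b c d \<longleftrightarrow> prop_m a c b d)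
   \<and> (\<forall>a c d. prop_m a a c d \<longrightarrow> d = c)
   \<and> (\<forall>a b d. prop_m a b a d \<longrightarrow> d = b)
   \<and> (\<forall>a b c d e f. prop_m a b c d \<and> prop_m c d e f \<longrightarrow> prop_m a b e f)
   \<and> (\<forall>a b c d e f. prop_m a b c d \<and> prop_m b e d f \<longrightarrow> prop_m a e c f)
   \<and> (\<forall>a b c d. prop_m a b b c \<and> prop_m b c c d \<longrightarrow> prop_m a b c d)
   \<and> \<not> (\<forall>a b. prop_m a b b a)"
proof -
  have "\<exists>a b :: int. a \<noteq> b" by (intro exI[of _ 0] exI[of _ 1]) simp
  then show ?thesis unfolding prop_m_iff by auto
qed

end
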